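(* Let $x_1,\ldots,x_n$ be real numbers, $s_k=\sum_{i=1}^k x_i$, and let $\hat s_1=s_1$, $\hat s_k=(\hat s_{k-1}+x_k)(1+\delta_k)$ for $2\le k\le n$, where $\delta_2,\ldots,\delta_n$ are independent random variables with mean zero and $|\delta_k|\le u$, with $0<u<1$. Let $E_n=\hat s_n-s_n$ and $\mathbf{s}_n=[s_2,\ldots,s_n]$. Then for any $\delta\in(0,1)$, with probability at least $1-\delta$, \[ |E_n| \le u\,\|\mathbf{s}_n\|_2\,\lambda(\delta/2)\,\bigl(1+\tilde\gamma_n(\delta/2)\bigr). \]
   Context: For $\delta\in(0,1)$, $\lambda(\delta)=\sqrt{2\log(2/\delta)}$ and $\tilde\gamma_n(\delta)=\exp\!\left(\frac{\lambda(\delta)\sqrt{n}\,u+nu^2}{1-u}\right)-1$. The recurrence models recursive summation in floating-point arithmetic with unit roundoff $u$; $\delta_k$ is the relative rounding error at step $k$. *)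

theory Defs
  imports "HOL-Probability.Probability"
begin

definition lam :: "real \<Rightarrow> real" where
  "lam \<delta> = sqrt (2 * ln (2 / \<delta>))"

definition gamma_tilde :: "nat \<Rightarrow> real \<Rightarrow> real \<Rightarrow> real" where
  "gamma_tilde n u \<delta> =
     exp ((lam \<delta> * sqrt (real n) * u + real n * u\<^sup>2) / (1 - u)) - 1"

definition psum :: "(nat \<Rightarrow> real) \<Rightarrow> nat \<Rightarrow> real" where
  "psum x k = (\<Sum>i=1..k. x i)"

text \<open>Computed partial sums: shat 1 = x 1, shat k = (shat (k-1) + x k)(1 + d k) for k >= 2.
  The value at index 0 is an unused filler.\<close>
fun shat :: "(nat \<Rightarrow> real) \<Rightarrow> (nat \<Rightarrow> real) \<Rightarrow> nat \<Rightarrow> real" where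
  "shat x d 0 = 0"
| "shat x d (Suc 0) = x 1"
| "shat x d (Suc (Suc k)) = (shat x d (Suc k) + x (Suc (Suc k))) * (1 + d (Suc (Suc k)))"

end

theory Submission
  imports Defs
begin

text \<open>
  Unrolling the recursion gives \<open>E\<^sub>n = \<Sum>\<^sub>k s\<^sub>k \<delta>\<^sub>k \<Prod>\<^sub>j\<^sub>>\<^sub>k (1 + \<delta>\<^sub>j)\<close>: read from
  \<open>k = n\<close> downwards, the coefficient of \<open>\<delta>\<^sub>k\<close> depends only on later errors, so \<open>E\<^sub>n\<close> is a
  martingale with bounded increments once the products are bounded, and Azuma's inequality
  applies on the product of the laws of the \<open>\<delta>\<^sub>k\<close>. The products are controlled by the
  tail sums \<open>\<Sum>\<^sub>i\<^sub>\<ge>\<^sub>j \<delta>\<^sub>i\<close>; by Azuma's inequality for the tail sum stopped at its last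
  crossing, all of them stay below \<open>\<lambda> u \<surd>n\<close> except with probability \<open>\<delta>/4\<close>, and then every
  product is at most \<open>exp (\<lambda> u \<surd>n) \<le> 1 + \<gamma>\<close>. Clipping the products at that level leaves
  \<open>E\<^sub>n\<close> unchanged on this event, and the two-sided Azuma bound for the clipped sum costs \<open>\<delta>/2\<close>.
\<close>

definition error_expansion :: "(nat \<Rightarrow> real) \<Rightarrow> nat \<Rightarrow> (nat \<Rightarrow> real) \<Rightarrow> real" where
  "error_expansion s n D = (\<Sum>k=2..n. s k * D k * (\<Prod>j=Suc k..n. 1 + D j))"

definition clipped_expansion :: "(nat \<Rightarrow> real) \<Rightarrow> nat \<Rightarrow> real \<Rightarrow> (nat \<Rightarrow> real) \<Rightarrow> real" where
  "clipped_expansion s n C D = (\<Sum>k=2..n. D k * (s k * max 0 (min (\<Prod>j=Suc k..n. 1 + D j) C)))"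

lemma shat_minus_psum:
  assumes "1 \<le> n"
  shows "shat x D n - psum x n = error_expansion (psum x) n D"
  unfolding error_expansion_def using assms
proof (induction n rule: nat_induct_at_least)
  case base
  then show ?case by (simp add: psum_def)
next
  case (Suc n)
  then obtain m where m: "n = Suc m" by (cases n) auto
  have "(\<Sum>k=2..Suc n. psum x k * D k * (\<Prod>j=Suc k..Suc n. 1 + D j))
     = (\<Sum>k=2..n. psum x k * D k * (\<Prod>j=Suc k..n. 1 + D j)) * (1 + D (Suc n))
       + psum x (Suc n) * D (Suc n)"
    using Suc.hyps by (simp add: sum_distrib_right mult.assoc)
  then show ?case using Suc.IH by (simp add: m psum_def algebra_simps)
qed

lemma error_expansion_cong:
  "(\<And>k. k \<in> {2..n} \<Longrightarrow> D k = D' k) \<Longrightarrow> error_expansion s n D = error_expansion s n D'"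
  unfolding error_expansion_def by (intro sum.cong prod.cong refl) auto

lemma lam_pos: "0 < \<delta> \<Longrightarrow> \<delta> < 2 \<Longrightarrow> 0 < lam \<delta>"
  by (simp add: lam_def)

lemma exp_neg_lam_square: "0 < \<delta> \<Longrightarrow> \<delta> < 2 \<Longrightarrow> exp (- (lam \<delta>)\<^sup>2 / 2) = \<delta> / 2"
  by (simp add: lam_def exp_minus)

lemma exp_lam_le_one_plus_gamma_tilde:
  assumes "0 \<le> u" "u < 1" "0 < \<delta>" "\<delta> < 2"
  shows "exp (lam \<delta> * u * sqrt (real n)) \<le> 1 + gamma_tilde n u \<delta>"
proof -
  have "lam \<delta> * u * sqrt (real n) \<le> lam \<delta> * u * sqrt (real n) / (1 - u)"
    using assms lam_pos[of \<delta>] by (simp add: divide_simps mult_left_le)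
  also have "\<dots> \<le> (lam \<delta> * sqrt (real n) * u + real n * u\<^sup>2) / (1 - u)"
    using assms by (intro divide_right_mono) (auto simp: algebra_simps)
  finally show ?thesis by (simp add: gamma_tilde_def)
qed

lemma Hoeffdings_lemma_centered:
  fixes N :: "real measure"
  assumes "prob_space N" and sets_N: "sets N = sets borel"
    and bounded: "AE z in N. z \<in> {-u..u}" and centered: "(\<integral>z. z \<partial>N) = 0"
  shows "(\<integral>\<^sup>+z. exp (l * z) \<partial>N) \<le> ennreal (exp (l\<^sup>2 * u\<^sup>2 / 2))"
proof -
  interpret prob_space N by fact
  have id_measurable: "(\<lambda>z. z) \<in> borel_measurable N"
    by (rule measurable_ident_sets[OF sets_N])
  have width: "(u - - u)\<^sup>2 / 8 = u\<^sup>2 / 2"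
    by (simp add: power2_eq_square field_simps)
  consider "0 < l" | "l < 0" | "l = 0" by linarith
  then show ?thesis
  proof cases
    case 1
    interpret interval_bounded_random_variable N "\<lambda>z. z" "-u" u
      by unfold_locales (rule id_measurable, rule bounded)
    show ?thesis
      using Hoeffdings_lemma_nn_integral_0[OF 1 centered] by (simp add: width mult.assoc)
  next
    case 2
    interpret interval_bounded_random_variable N "\<lambda>z. - z" "-u" u
      by unfold_locales (use id_measurable bounded in \<open>auto elim: eventually_mono\<close>)
    have "(\<integral>\<^sup>+z. exp ((-l) * (-z)) \<partial>N) \<le> ennreal (exp ((-l)\<^sup>2 * (u - - u)\<^sup>2 / 8))"
      using 2 centered by (intro Hoeffdings_lemma_nn_integral_0) auto
    then show ?thesis by (simp add: width mult.assoc)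
  next
    case 3
    then show ?thesis by (simp add: emeasure_space_1)
  qed
qed

lemma (in prob_space) prob_ge_le_exp_of_mgf:
  assumes [measurable]: "f \<in> borel_measurable M" and "0 < \<theta>"
    and mgf: "(\<integral>\<^sup>+x. exp (\<theta> * f x) \<partial>M) \<le> ennreal (exp V)"
  shows "prob {x\<in>space M. a \<le> f x} \<le> exp (V - \<theta> * a)"
proof -
  have "emeasure M {x\<in>space M. a \<le> f x}
      \<le> ennreal (exp (- \<theta> * a)) * (\<integral>\<^sup>+x. ennreal (exp (\<theta> * f x)) * indicator (space M) x \<partial>M)"
    using \<open>0 < \<theta>\<close> by (intro Chernoff_ineq_nn_integral_ge) auto
  also have "(\<integral>\<^sup>+x. ennreal (exp (\<theta> * f x)) * indicator (space M) x \<partial>M) = (\<integral>\<^sup>+x. exp (\<theta> * f x) \<partial>M)"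
    by (intro nn_integral_cong) simp
  also have "ennreal (exp (- \<theta> * a)) * \<dots> \<le> ennreal (exp (- \<theta> * a)) * ennreal (exp V)"
    by (intro mult_left_mono mgf) simp
  also have "\<dots> = ennreal (exp (V - \<theta> * a))"
    by (simp add: exp_add[symmetric] ennreal_mult[symmetric])
  finally show ?thesis by (simp add: emeasure_eq_measure)
qed

lemma borel_measurable_PiM_depends_on:
  assumes f: "f \<in> borel_measurable (PiM J M)" and "J \<subseteq> K"
    and depends: "\<And>y y'. (\<forall>j\<in>J. y j = y' j) \<Longrightarrow> f y = f y'"
  shows "f \<in> borel_measurable (PiM K M)"
proof -
  have "(\<lambda>y. f (restrict y J)) \<in> borel_measurable (PiM K M)"
    using measurable_comp[OF measurable_restrict_subset[OF \<open>J \<subseteq> K\<close>] f] by (simp add: comp_def)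
  moreover have "f (restrict y J) = f y" for y
    by (rule depends) simp
  ultimately show ?thesis by simp
qed

text \<open>The weight is \<open>1\<close> exactly from the last index whose tail sum exceeds \<open>a\<close> on, so the
  weighted sum is that tail sum.\<close>

lemma stopped_tail_sum_gt:
  fixes y :: "nat \<Rightarrow> real"
  assumes "j \<in> {m..n}" and "a < (\<Sum>i=j..n. y i)"
  shows "a < (\<Sum>k=m..n. y k * (if \<forall>j\<in>{Suc k..n}. (\<Sum>i=j..n. y i) \<le> a then 1 else 0))"
proof -
  define J where "J = {j \<in> {m..n}. a < (\<Sum>i=j..n. y i)}"
  define t where "t = Max J"
  have "finite J" "J \<noteq> {}" using assms unfolding J_def by auto
  then have t: "t \<in> J" and t_max: "\<And>j. j \<in> J \<Longrightarrow> j \<le> t"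
    unfolding t_def by auto
  have stopped: "(\<forall>j\<in>{Suc k..n}. (\<Sum>i=j..n. y i) \<le> a) \<longleftrightarrow> t \<le> k" if "k \<in> {m..n}" for k
  proof
    assume "\<forall>j\<in>{Suc k..n}. (\<Sum>i=j..n. y i) \<le> a"
    then show "t \<le> k" using t unfolding J_def by (metis (no_types, lifting) atLeastAtMost_iff
          mem_Collect_eq not_less_eq_eq not_le)
  next
    assume "t \<le> k"
    show "\<forall>j\<in>{Suc k..n}. (\<Sum>i=j..n. y i) \<le> a"
    proof
      fix j assume j: "j \<in> {Suc k..n}"
      then have "j \<notin> J" using t_max \<open>t \<le> k\<close> by fastforce
      then show "(\<Sum>i=j..n. y i) \<le> a" using j that unfolding J_def by auto
    qed
  qed
  have "(\<Sum>k=m..n. y k * (if \<forall>j\<in>{Suc k..n}. (\<Sum>i=j..n. y i) \<le> a then 1 else 0))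
      = (\<Sum>k=m..n. if t \<le> k then y k else 0)"
    by (intro sum.cong) (auto simp: stopped)
  also have "\<dots> = (\<Sum>k\<in>{k \<in> {m..n}. t \<le> k}. y k)"
    by (rule sum.inter_filter[symmetric]) simp
  also have "{k \<in> {m..n}. t \<le> k} = {t..n}" using t unfolding J_def by auto
  finally show ?thesis using t unfolding J_def by simp
qed

lemma prod_one_plus_le_exp_sum:
  fixes y :: "nat \<Rightarrow> real"
  assumes "\<And>j. j \<in> J \<Longrightarrow> -1 \<le> y j"
  shows "0 \<le> (\<Prod>j\<in>J. 1 + y j)" and "(\<Prod>j\<in>J. 1 + y j) \<le> exp (\<Sum>j\<in>J. y j)"
proof -
  have factor_nonneg: "0 \<le> 1 + y j" if "j \<in> J" for j
    using assms[OF that] by linarith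
  then show "0 \<le> (\<Prod>j\<in>J. 1 + y j)" by (rule prod_nonneg)
  have "(\<Prod>j\<in>J. 1 + y j) \<le> (\<Prod>j\<in>J. exp (y j))"
    using factor_nonneg by (intro prod_mono) (simp add: add.commute)
  then show "(\<Prod>j\<in>J. 1 + y j) \<le> exp (\<Sum>j\<in>J. y j)" by (cases "finite J") (simp_all add: exp_sum)
qed

lemma clipped_expansion_eq_error_expansion:
  fixes D :: "nat \<Rightarrow> real"
  assumes bounded: "\<And>k. k \<in> {2..n} \<Longrightarrow> \<bar>D k\<bar> \<le> 1"
    and tails: "\<And>j. j \<in> {2..n} \<Longrightarrow> (\<Sum>i=j..n. D i) \<le> a" and "0 \<le> a" "exp a \<le> C"
  shows "clipped_expansion s n C D = error_expansion s n D"
  unfolding clipped_expansion_def error_expansion_def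
proof (intro sum.cong refl)
  fix k assume k: "k \<in> {2..n}"
  have "-1 \<le> D j" if "j \<in> {Suc k..n}" for j
    using bounded[of j] that k by force
  then have "0 \<le> (\<Prod>j=Suc k..n. 1 + D j)" and "(\<Prod>j=Suc k..n. 1 + D j) \<le> exp (\<Sum>j=Suc k..n. D j)"
    by (blast intro: prod_one_plus_le_exp_sum)+
  moreover have "(\<Sum>j=Suc k..n. D j) \<le> a"
    using tails[of "Suc k"] \<open>0 \<le> a\<close> k by (cases "Suc k \<le> n") auto
  then have "exp (\<Sum>j=Suc k..n. D j) \<le> C"
    using \<open>exp a \<le> C\<close> by (meson exp_le_cancel_iff order.trans)
  ultimately show "D k * (s k * max 0 (min (\<Prod>j=Suc k..n. 1 + D j) C)) = s k * D k * (\<Prod>j=Suc k..n. 1 + D j)"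
    by simp
qed

lemma (in prob_space) distr_restrict_indep_vars:
  assumes "\<And>i. i \<in> I \<Longrightarrow> X i \<in> borel_measurable M" and "indep_vars (\<lambda>_. borel) X I"
    and N: "\<And>i. i \<in> I \<Longrightarrow> N i = distr M borel (X i)"
  shows "distr M (PiM I N) (\<lambda>\<omega>. \<lambda>i\<in>I. X i \<omega>) = PiM I N"
proof (cases "I = {}")
  case True
  then have const: "(\<lambda>\<omega>. \<lambda>i\<in>I. X i \<omega>) = (\<lambda>_. \<lambda>_. undefined)" by (simp add: restrict_def)
  show ?thesis
  proof (rule measure_eqI)
    fix A assume "A \<in> sets (distr M (PiM I N) (\<lambda>\<omega>. \<lambda>i\<in>I. X i \<omega>))"
    then have "A = {} \<or> A = {\<lambda>_. undefined}" using True by (simp add: sets_PiM_empty)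
    then show "emeasure (distr M (PiM I N) (\<lambda>\<omega>. \<lambda>i\<in>I. X i \<omega>)) A = emeasure (PiM I N) A"
      unfolding const using True by (auto simp: emeasure_distr emeasure_space_1 sets_PiM_empty)
  qed simp
next
  case False
  have "distr M (PiM I (\<lambda>_. borel)) (\<lambda>\<omega>. \<lambda>i\<in>I. X i \<omega>) = PiM I (\<lambda>i. distr M borel (X i))"
    using assms False by (subst indep_vars_iff_distr_eq_PiM'[symmetric]) auto
  also have "\<dots> = PiM I N"
    using N by (intro PiM_cong) auto
  finally show ?thesis
    using N by (subst distr_cong[OF refl sets_PiM_cong[OF refl, of _ _ "\<lambda>_. borel"]]) auto
qed

lemma (in prob_space) prob_restrict_indep_vars_notin:
  assumes measurable: "\<And>i. i \<in> I \<Longrightarrow> X i \<in> borel_measurable M" and "indep_vars (\<lambda>_. borel) X I"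
    and N: "\<And>i. i \<in> I \<Longrightarrow> N i = distr M borel (X i)" and A: "A \<in> sets (PiM I N)"
  shows "prob {\<omega> \<in> space M. (\<lambda>i\<in>I. X i \<omega>) \<notin> A} = 1 - measure (PiM I N) A"
proof -
  have X: "(\<lambda>\<omega>. \<lambda>i\<in>I. X i \<omega>) \<in> measurable M (PiM I N)"
    using measurable N by (intro measurable_restrict) (simp add: measurable_cong_sets[OF refl, of _ _ borel])
  have "{\<omega> \<in> space M. (\<lambda>i\<in>I. X i \<omega>) \<notin> A} = space M - ((\<lambda>\<omega>. \<lambda>i\<in>I. X i \<omega>) -` A \<inter> space M)"
    by auto
  also have "prob \<dots> = 1 - measure (distr M (PiM I N) (\<lambda>\<omega>. \<lambda>i\<in>I. X i \<omega>)) A"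
    using X A by (simp add: prob_compl measurable_sets measure_distr)
  also have "distr M (PiM I N) (\<lambda>\<omega>. \<lambda>i\<in>I. X i \<omega>) = PiM I N"
    using assms by (intro distr_restrict_indep_vars)
  finally show ?thesis .
qed

locale subgaussian_coordinates =
  fixes N :: "nat \<Rightarrow> real measure" and u :: real
  assumes prob_space_N: "\<And>i. prob_space (N i)"
    and sets_N: "\<And>i. sets (N i) = sets borel"
    and mgf_N: "\<And>i l. (\<integral>\<^sup>+z. exp (l * z) \<partial>N i) \<le> ennreal (exp (l\<^sup>2 * u\<^sup>2 / 2))"
begin

sublocale product_sigma_finite N
  by (simp add: product_sigma_finite_def prob_space_N prob_space_imp_sigma_finite)

lemma prob_space_PiM_N: "prob_space (PiM J N)"
  by (intro prob_space_PiM prob_space_N)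

lemma measurable_component: "k \<in> J \<Longrightarrow> (\<lambda>y. y k) \<in> borel_measurable (PiM J N)"
  using measurable_component_singleton[of k J N] measurable_cong_sets[OF refl sets_N] by blast

lemma nn_integral_exp_affine_le:
  assumes "\<bar>b\<bar> \<le> c"
  shows "(\<integral>\<^sup>+z. exp (\<theta> * (z * b + r)) \<partial>N i) \<le> ennreal (exp (\<theta>\<^sup>2 * u\<^sup>2 / 2 * c\<^sup>2)) * ennreal (exp (\<theta> * r))"
proof -
  have "(\<integral>\<^sup>+z. exp (\<theta> * (z * b + r)) \<partial>N i) = (\<integral>\<^sup>+z. exp ((\<theta> * b) * z) \<partial>N i) * ennreal (exp (\<theta> * r))"
    by (subst nn_integral_multc[symmetric])
       (auto simp: measurable_cong_sets[OF sets_N refl] ennreal_mult[symmetric] exp_add[symmetric]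
        algebra_simps intro!: nn_integral_cong)
  also have "\<dots> \<le> ennreal (exp ((\<theta> * b)\<^sup>2 * u\<^sup>2 / 2)) * ennreal (exp (\<theta> * r))"
    by (intro mult_right_mono mgf_N) simp
  also have "\<dots> \<le> ennreal (exp (\<theta>\<^sup>2 * u\<^sup>2 / 2 * c\<^sup>2)) * ennreal (exp (\<theta> * r))"
  proof -
    have "b\<^sup>2 \<le> c\<^sup>2"
      using assms by (metis abs_ge_zero power2_abs power_mono)
    then have "(\<theta> * b)\<^sup>2 * u\<^sup>2 / 2 \<le> \<theta>\<^sup>2 * u\<^sup>2 / 2 * c\<^sup>2"
      using mult_left_mono[of "b\<^sup>2" "c\<^sup>2" "\<theta>\<^sup>2 * u\<^sup>2 / 2"] by (simp add: algebra_simps)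
    then show ?thesis by (intro mult_right_mono ennreal_leI) auto
  qed
  finally show ?thesis .
qed

lemma nn_integral_exp_insert_le:
  assumes "finite J" "m \<notin> J"
    and g_measurable: "g \<in> borel_measurable (PiM J N)"
    and g_depends: "\<And>y y'. (\<forall>j\<in>J. y j = y' j) \<Longrightarrow> g y = g y'"
    and g_bounded: "\<And>y. \<bar>g y\<bar> \<le> c"
    and R_measurable: "R \<in> borel_measurable (PiM J N)"
    and R_depends: "\<And>y y'. (\<forall>j\<in>J. y j = y' j) \<Longrightarrow> R y = R y'"
  shows "(\<integral>\<^sup>+y. exp (\<theta> * (y m * g y + R y)) \<partial>PiM (insert m J) N)
           \<le> ennreal (exp (\<theta>\<^sup>2 * u\<^sup>2 / 2 * c\<^sup>2)) * (\<integral>\<^sup>+y. exp (\<theta> * R y) \<partial>PiM J N)"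
proof -
  let ?K = "exp (\<theta>\<^sup>2 * u\<^sup>2 / 2 * c\<^sup>2)"
  have exp_R_measurable: "(\<lambda>y. ennreal (exp (\<theta> * R y))) \<in> borel_measurable (PiM J N)"
    using R_measurable by measurable
  have [measurable]: "g \<in> borel_measurable (PiM (insert m J) N)" "R \<in> borel_measurable (PiM (insert m J) N)"
    by (auto intro: borel_measurable_PiM_depends_on g_measurable g_depends R_measurable R_depends)
  have [measurable]: "(\<lambda>y. y m) \<in> borel_measurable (PiM (insert m J) N)"
    by (simp add: measurable_component)
  have update: "g (y(m := z)) = g y" "R (y(m := z)) = R y" for y z
    using \<open>m \<notin> J\<close> by (auto intro: g_depends R_depends)
  have "(\<integral>\<^sup>+y. exp (\<theta> * (y m * g y + R y)) \<partial>PiM (insert m J) N)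
      = (\<integral>\<^sup>+y. (\<integral>\<^sup>+z. exp (\<theta> * (z * g y + R y)) \<partial>N m) \<partial>PiM J N)"
    using assms by (subst product_nn_integral_insert) (auto simp: update, measurable)
  also have "\<dots> \<le> (\<integral>\<^sup>+y. ennreal ?K * ennreal (exp (\<theta> * R y)) \<partial>PiM J N)"
    using g_bounded by (intro nn_integral_mono nn_integral_exp_affine_le)
  also have "\<dots> = ennreal ?K * (\<integral>\<^sup>+y. exp (\<theta> * R y) \<partial>PiM J N)"
    using exp_R_measurable by (rule nn_integral_cmult)
  finally show ?thesis .
qed

lemma borel_measurable_predictable_sum:
  assumes g_measurable: "\<And>k. k \<in> {m..n} \<Longrightarrow> g k \<in> borel_measurable (PiM {Suc k..n} N)"
    and g_depends: "\<And>k y y'. k \<in> {m..n} \<Longrightarrow> (\<forall>j\<in>{Suc k..n}. y j = y' j) \<Longrightarrow> g k y = g k y'"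
  shows "(\<lambda>y. \<Sum>k=m..n. y k * g k y) \<in> borel_measurable (PiM {m..n} N)"
proof (intro borel_measurable_sum borel_measurable_times)
  fix k assume k: "k \<in> {m..n}"
  then show "(\<lambda>y. y k) \<in> borel_measurable (PiM {m..n} N)"
    by (rule measurable_component)
  show "g k \<in> borel_measurable (PiM {m..n} N)"
    using k by (intro borel_measurable_PiM_depends_on[OF g_measurable _ g_depends]) auto
qed

lemma nn_integral_exp_predictable_sum_le:
  assumes "\<And>k. k \<in> {m..n} \<Longrightarrow> g k \<in> borel_measurable (PiM {Suc k..n} N)"
    and "\<And>k y y'. k \<in> {m..n} \<Longrightarrow> (\<forall>j\<in>{Suc k..n}. y j = y' j) \<Longrightarrow> g k y = g k y'"
    and "\<And>k y. k \<in> {m..n} \<Longrightarrow> \<bar>g k y\<bar> \<le> c k"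
  shows "(\<integral>\<^sup>+y. exp (\<theta> * (\<Sum>k=m..n. y k * g k y)) \<partial>PiM {m..n} N)
           \<le> ennreal (exp (\<theta>\<^sup>2 * u\<^sup>2 / 2 * (\<Sum>k=m..n. (c k)\<^sup>2)))"
  using assms
proof (induction "Suc n - m" arbitrary: m)
  \<comment> \<open>The weight of the lowest coordinate depends only on the higher ones, so that coordinate is
    integrated out first.\<close>
  case 0
  then show ?case by (simp add: PiM_empty)
next
  case (Suc l)
  then have "m \<le> n" by simp
  then have split: "{m..n} = insert m {Suc m..n}" by auto
  define R where "R y = (\<Sum>k=Suc m..n. y k * g k y)" for y
  have R_measurable: "R \<in> borel_measurable (PiM {Suc m..n} N)"
    unfolding R_def using Suc.prems by (intro borel_measurable_predictable_sum) auto
  have R_depends: "R y = R y'" if "\<forall>j\<in>{Suc m..n}. y j = y' j" for y y'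
    unfolding R_def using that Suc.prems(2) by (intro sum.cong) auto
  have "(\<integral>\<^sup>+y. exp (\<theta> * (\<Sum>k=m..n. y k * g k y)) \<partial>PiM {m..n} N)
      = (\<integral>\<^sup>+y. exp (\<theta> * (y m * g m y + R y)) \<partial>PiM (insert m {Suc m..n} ) N)"
    unfolding R_def split by simp
  also have "\<dots> \<le> ennreal (exp (\<theta>\<^sup>2 * u\<^sup>2 / 2 * (c m)\<^sup>2)) * (\<integral>\<^sup>+y. exp (\<theta> * R y) \<partial>PiM {Suc m..n} N)"
    using Suc.prems \<open>m \<le> n\<close> by (intro nn_integral_exp_insert_le R_measurable R_depends) auto
  also have "\<dots> \<le> ennreal (exp (\<theta>\<^sup>2 * u\<^sup>2 / 2 * (c m)\<^sup>2))
                  * ennreal (exp (\<theta>\<^sup>2 * u\<^sup>2 / 2 * (\<Sum>k=Suc m..n. (c k)\<^sup>2)))"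
    unfolding R_def using Suc by (intro mult_left_mono Suc.hyps) auto
  also have "\<dots> = ennreal (exp (\<theta>\<^sup>2 * u\<^sup>2 / 2 * (\<Sum>k=m..n. (c k)\<^sup>2)))"
    unfolding split by (simp add: ennreal_mult[symmetric] exp_add[symmetric] algebra_simps)
  finally show ?case .
qed

lemma prob_predictable_sum_ge_le:
  assumes "\<And>k. k \<in> {m..n} \<Longrightarrow> g k \<in> borel_measurable (PiM {Suc k..n} N)"
    and "\<And>k y y'. k \<in> {m..n} \<Longrightarrow> (\<forall>j\<in>{Suc k..n}. y j = y' j) \<Longrightarrow> g k y = g k y'"
    and "\<And>k y. k \<in> {m..n} \<Longrightarrow> \<bar>g k y\<bar> \<le> c k"
    and "0 < w" "0 < L" and variance: "u\<^sup>2 * (\<Sum>k=m..n. (c k)\<^sup>2) \<le> w\<^sup>2"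
  shows "measure (PiM {m..n} N) {y \<in> space (PiM {m..n} N). L * w \<le> (\<Sum>k=m..n. y k * g k y)}
           \<le> exp (- L\<^sup>2 / 2)"
proof -
  interpret prob_space "PiM {m..n} N" by (rule prob_space_PiM_N)
  define \<theta> where "\<theta> = L / w"
  have "(\<integral>\<^sup>+y. exp (\<theta> * (\<Sum>k=m..n. y k * g k y)) \<partial>PiM {m..n} N)
      \<le> ennreal (exp (\<theta>\<^sup>2 * u\<^sup>2 / 2 * (\<Sum>k=m..n. (c k)\<^sup>2)))"
    using assms by (intro nn_integral_exp_predictable_sum_le)
  also have "\<dots> \<le> ennreal (exp (\<theta>\<^sup>2 * w\<^sup>2 / 2))"
    using mult_left_mono[OF variance, of "\<theta>\<^sup>2 / 2"] by (intro ennreal_leI) (simp add: algebra_simps)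
  finally have "prob {y \<in> space (PiM {m..n} N). L * w \<le> (\<Sum>k=m..n. y k * g k y)}
      \<le> exp (\<theta>\<^sup>2 * w\<^sup>2 / 2 - \<theta> * (L * w))"
    using assms by (intro prob_ge_le_exp_of_mgf borel_measurable_predictable_sum) (auto simp: \<theta>_def)
  also have "\<theta>\<^sup>2 * w\<^sup>2 / 2 - \<theta> * (L * w) = - L\<^sup>2 / 2"
    using \<open>0 < w\<close> by (simp add: \<theta>_def power2_eq_square field_simps)
  finally show ?thesis .
qed

lemma prob_predictable_sum_abs_ge_le:
  assumes "\<And>k. k \<in> {m..n} \<Longrightarrow> g k \<in> borel_measurable (PiM {Suc k..n} N)"
    and g_depends: "\<And>k y y'. k \<in> {m..n} \<Longrightarrow> (\<forall>j\<in>{Suc k..n}. y j = y' j) \<Longrightarrow> g k y = g k y'"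
    and "\<And>k y. k \<in> {m..n} \<Longrightarrow> \<bar>g k y\<bar> \<le> c k"
    and "0 < w" "0 < L" "u\<^sup>2 * (\<Sum>k=m..n. (c k)\<^sup>2) \<le> w\<^sup>2"
  shows "measure (PiM {m..n} N) {y \<in> space (PiM {m..n} N). L * w \<le> \<bar>\<Sum>k=m..n. y k * g k y\<bar>}
           \<le> 2 * exp (- L\<^sup>2 / 2)"
proof -
  let ?P = "PiM {m..n} N"
  interpret prob_space ?P by (rule prob_space_PiM_N)
  have upper: "prob {y \<in> space ?P. L * w \<le> (\<Sum>k=m..n. y k * g k y)} \<le> exp (- L\<^sup>2 / 2)"
    using assms by (intro prob_predictable_sum_ge_le)
  have "prob {y \<in> space ?P. L * w \<le> (\<Sum>k=m..n. y k * - g k y)} \<le> exp (- L\<^sup>2 / 2)"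
    using assms by (intro prob_predictable_sum_ge_le[where c = c]) (auto intro: g_depends)
  then have lower: "prob {y \<in> space ?P. L * w \<le> - (\<Sum>k=m..n. y k * g k y)} \<le> exp (- L\<^sup>2 / 2)"
    by (simp add: sum_negf)
  have "(\<lambda>y. \<Sum>k=m..n. y k * g k y) \<in> borel_measurable ?P"
    using assms by (intro borel_measurable_predictable_sum)
  then have "prob {y \<in> space ?P. L * w \<le> \<bar>\<Sum>k=m..n. y k * g k y\<bar>}
      \<le> prob {y \<in> space ?P. L * w \<le> (\<Sum>k=m..n. y k * g k y)}
        + prob {y \<in> space ?P. L * w \<le> - (\<Sum>k=m..n. y k * g k y)}"
    by (intro order.trans[OF _ measure_Un_le]) (auto intro!: finite_measure_mono)
  then show ?thesis using upper lower by simp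
qed

lemma prob_tail_sum_gt_le:
  assumes "0 < w" "0 < L" and variance: "u\<^sup>2 * real (Suc n - m) \<le> w\<^sup>2"
  shows "measure (PiM {m..n} N) {y \<in> space (PiM {m..n} N). \<exists>j\<in>{m..n}. L * w < (\<Sum>i=j..n. y i)}
           \<le> exp (- L\<^sup>2 / 2)"
proof -
  let ?P = "PiM {m..n} N"
  interpret prob_space ?P by (rule prob_space_PiM_N)
  define q where "q k (y :: nat \<Rightarrow> real) = (if \<forall>j\<in>{Suc k..n}. (\<Sum>i=j..n. y i) \<le> L * w then 1 else (0::real))"
    for k y
  have q_measurable: "q k \<in> borel_measurable (PiM {Suc k..n} N)" for k
  proof -
    have "(\<lambda>y. \<Sum>i=j..n. y i) \<in> borel_measurable (PiM {Suc k..n} N)" if "j \<in> {Suc k..n}" for j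
      using that by (intro borel_measurable_sum measurable_component) auto
    then show ?thesis unfolding q_def by measurable
  qed
  have q_depends: "q k y = q k y'" if "\<forall>j\<in>{Suc k..n}. y j = y' j" for k y y'
    unfolding q_def using that by (intro if_cong ball_cong refl arg_cong2[where f = "(\<le>)"] sum.cong) auto
  have q_bounded: "\<bar>q k y\<bar> \<le> 1" for k y
    by (simp add: q_def)
  have "{y \<in> space ?P. \<exists>j\<in>{m..n}. L * w < (\<Sum>i=j..n. y i)}
      \<subseteq> {y \<in> space ?P. L * w \<le> (\<Sum>k=m..n. y k * q k y)}"
    unfolding q_def by (auto dest!: stopped_tail_sum_gt)
  then have "prob {y \<in> space ?P. \<exists>j\<in>{m..n}. L * w < (\<Sum>i=j..n. y i)}
      \<le> prob {y \<in> space ?P. L * w \<le> (\<Sum>k=m..n. y k * q k y)}"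
    using q_measurable q_depends
    by (intro finite_measure_mono) (use borel_measurable_predictable_sum[of m n q] in measurable)
  also have "\<dots> \<le> exp (- L\<^sup>2 / 2)"
    using assms by (intro prob_predictable_sum_ge_le[where c = "\<lambda>_. 1"] q_measurable q_depends q_bounded) auto
  finally show ?thesis .
qed

lemma sets_tail_sum_gt:
  "{y \<in> space (PiM {m..n} N). \<exists>j\<in>{m..n}. b < (\<Sum>i=j..n. y i)} \<in> sets (PiM {m..n} N)"
proof -
  have "(\<lambda>y. \<Sum>i=j..n. y i) \<in> borel_measurable (PiM {m..n} N)" if "j \<in> {m..n}" for j
    using that by (intro borel_measurable_sum measurable_component) auto
  then show ?thesis by measurable
qed

lemma borel_measurable_error_expansion: "error_expansion s n \<in> borel_measurable (PiM {2..n} N)"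
  unfolding error_expansion_def
  by (intro borel_measurable_sum borel_measurable_times borel_measurable_prod borel_measurable_add
      borel_measurable_const measurable_component) auto

lemma sets_error_expansion_gt:
  "{y \<in> space (PiM {2..n} N). (\<forall>k\<in>{2..n}. \<bar>y k\<bar> \<le> u) \<and> B < \<bar>error_expansion s n y\<bar>}
     \<in> sets (PiM {2..n} N)"
proof -
  have "Measurable.pred (PiM {2..n} N) (\<lambda>y. \<forall>k\<in>{2..n}. \<bar>y k\<bar> \<le> u)"
  proof (rule pred_intros_finite(3))
    fix k assume "k \<in> {2..n}"
    then have [measurable]: "(\<lambda>y. y k) \<in> borel_measurable (PiM {2..n} N)"
      by (rule measurable_component)
    show "Measurable.pred (PiM {2..n} N) (\<lambda>y. \<bar>y k\<bar> \<le> u)" by measurable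
  qed simp
  then show ?thesis using borel_measurable_error_expansion by measurable
qed

lemma prob_clipped_expansion_ge_le:
  assumes "0 < u" "0 < L" "0 < C" and "0 < (\<Sum>k=2..n. (s k)\<^sup>2)"
  shows "measure (PiM {2..n} N)
           {y \<in> space (PiM {2..n} N). L * (u * C * sqrt (\<Sum>k=2..n. (s k)\<^sup>2)) \<le> \<bar>clipped_expansion s n C y\<bar>}
         \<le> 2 * exp (- L\<^sup>2 / 2)"
proof -
  define g where "g k (y :: nat \<Rightarrow> real) = s k * max 0 (min (\<Prod>j=Suc k..n. 1 + y j) C)" for k y
  have "g k \<in> borel_measurable (PiM {Suc k..n} N)" for k
    unfolding g_def by (intro borel_measurable_times borel_measurable_max borel_measurable_min
        borel_measurable_prod borel_measurable_add borel_measurable_const measurable_component) auto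
  moreover have "g k y = g k y'" if "\<forall>j\<in>{Suc k..n}. y j = y' j" for k y y'
    unfolding g_def using that by (metis (no_types, lifting) atLeastAtMost_iff prod.cong)
  moreover have "\<bar>g k y\<bar> \<le> \<bar>s k\<bar> * C" for k y
    unfolding g_def abs_mult using \<open>0 < C\<close> by (intro mult_left_mono) auto
  moreover have "u\<^sup>2 * (\<Sum>k=2..n. (\<bar>s k\<bar> * C)\<^sup>2) = (u * C * sqrt (\<Sum>k=2..n. (s k)\<^sup>2))\<^sup>2"
    using assms by (simp add: sum_distrib_left algebra_simps)
  ultimately show ?thesis
    unfolding clipped_expansion_def g_def[symmetric] using assms
    by (intro prob_predictable_sum_abs_ge_le[where c = "\<lambda>k. \<bar>s k\<bar> * C"]) auto
qed

lemma borel_measurable_clipped_expansion: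
  "clipped_expansion s n C \<in> borel_measurable (PiM {2..n} N)"
  unfolding clipped_expansion_def
  by (intro borel_measurable_sum borel_measurable_times borel_measurable_max borel_measurable_min
      borel_measurable_prod borel_measurable_add borel_measurable_const measurable_component) auto

lemma prob_error_expansion_gt_le:
  fixes s :: "nat \<Rightarrow> real"
  assumes "0 < u" "u \<le> 1" "0 < L" and exp_le_C: "exp (L * u * sqrt (real n)) \<le> C"
  shows "measure (PiM {2..n} N)
           {y \<in> space (PiM {2..n} N). (\<forall>k\<in>{2..n}. \<bar>y k\<bar> \<le> u) \<and>
              L * u * C * sqrt (\<Sum>k=2..n. (s k)\<^sup>2) < \<bar>error_expansion s n y\<bar>}
         \<le> 3 * exp (- L\<^sup>2 / 2)" (is "measure _ ?Bad \<le> _")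
proof -
  let ?P = "PiM {2..n} N"
  interpret prob_space ?P by (rule prob_space_PiM_N)
  define S2 where "S2 = (\<Sum>k=2..n. (s k)\<^sup>2)"
  define a where "a = L * (u * sqrt (real n))"
  define Tail where "Tail = {y \<in> space ?P. \<exists>j\<in>{2..n}. a < (\<Sum>i=j..n. y i)}"
  define Large where "Large = {y \<in> space ?P. L * (u * C * sqrt S2) \<le> \<bar>clipped_expansion s n C y\<bar>}"
  have "0 \<le> a" and "exp a \<le> C" using assms by (simp_all add: a_def mult.assoc)
  show ?thesis
  proof (cases "S2 = 0")
    case True
    then have "s k = 0" if "k \<in> {2..n}" for k
      using that by (simp add: S2_def sum_nonneg_eq_0_iff)
    then have no_bad: "?Bad = {}" by (simp add: error_expansion_def)
    show ?thesis unfolding no_bad by simp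
  next
    case False
    then have "0 < S2" by (simp add: S2_def order.not_eq_order_implies_strict sum_nonneg)
    have "2 \<le> n" using False by (rule contrapos_np) (simp add: S2_def)
    have prob_Tail: "prob Tail \<le> exp (- L\<^sup>2 / 2)"
      unfolding Tail_def a_def using assms \<open>2 \<le> n\<close>
      by (intro prob_tail_sum_gt_le) (auto simp: power_mult_distrib intro: mult_left_mono)
    have prob_Large: "prob Large \<le> 2 * exp (- L\<^sup>2 / 2)"
      unfolding Large_def S2_def using assms \<open>0 < S2\<close> \<open>exp a \<le> C\<close>
      by (intro prob_clipped_expansion_ge_le) (auto simp: S2_def intro: less_le_trans[OF exp_gt_zero])
    have "?Bad \<subseteq> Tail \<union> Large"
    proof
      fix y assume y: "y \<in> ?Bad"
      show "y \<in> Tail \<union> Large"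
      proof (cases "y \<in> Tail")
        case False
        then have "clipped_expansion s n C y = error_expansion s n y"
          using y \<open>u \<le> 1\<close> \<open>0 \<le> a\<close> \<open>exp a \<le> C\<close>
          by (intro clipped_expansion_eq_error_expansion) (auto simp: Tail_def not_less intro: order.trans)
        then show ?thesis using y by (simp add: Large_def S2_def algebra_simps)
      qed simp
    qed
    moreover have "Tail \<in> events" "Large \<in> events"
      unfolding Tail_def Large_def using sets_tail_sum_gt borel_measurable_clipped_expansion by measurable
    ultimately have "prob ?Bad \<le> prob Tail + prob Large"
      by (intro order.trans[OF finite_measure_mono measure_Un_le]) auto
    with prob_Tail prob_Large show ?thesis by linarith
  qed
qed

end

lemma (in prob_space) subgaussian_coordinates_distr:
  assumes measurable: "\<And>i. i \<in> I \<Longrightarrow> X i \<in> borel_measurable M"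
    and centered: "\<And>i. i \<in> I \<Longrightarrow> expectation (X i) = 0"
    and bounded: "\<And>i \<omega>. i \<in> I \<Longrightarrow> \<omega> \<in> space M \<Longrightarrow> \<bar>X i \<omega>\<bar> \<le> u" and "0 \<le> u"
  shows "subgaussian_coordinates (\<lambda>i. if i \<in> I then distr M borel (X i) else return borel 0) u"
    (is "subgaussian_coordinates ?N u")
proof (rule subgaussian_coordinates.intro)
  fix i
  show sets_N: "sets (?N i) = sets borel" by simp
  show prob_space_N: "prob_space (?N i)"
    using measurable by (auto intro: prob_space_distr prob_space_return)
  have bounded_N: "AE z in ?N i. z \<in> {-u..u}"
    using bounded[of i] measurable \<open>0 \<le> u\<close> by (cases "i \<in> I") (force simp: AE_distr_iff abs_le_iff, simp add: AE_return)
  have centered_N: "(\<integral>z. z \<partial>?N i) = 0"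
    using centered measurable by (simp add: integral_distr integral_return)
  show "(\<integral>\<^sup>+z. exp (l * z) \<partial>?N i) \<le> ennreal (exp (l\<^sup>2 * u\<^sup>2 / 2))" for l
    using prob_space_N sets_N bounded_N centered_N by (intro Hoeffdings_lemma_centered)
qed

theorem theorem3p3:
  fixes M :: "'a measure" and x :: "nat \<Rightarrow> real" and d :: "nat \<Rightarrow> 'a \<Rightarrow> real"
    and n :: nat and u \<delta> :: real
  assumes "prob_space M"
    and "n \<ge> 1"
    and "0 < u" and "u < 1"
    and "\<And>k. k \<in> {2..n} \<Longrightarrow> d k \<in> borel_measurable M"
    and "prob_space.indep_vars M (\<lambda>_. borel) d {2..n}"
    and "\<And>k. k \<in> {2..n} \<Longrightarrow> prob_space.expectation M (d k) = 0"
    and "\<And>k \<omega>. k \<in> {2..n} \<Longrightarrow> \<omega> \<in> space M \<Longrightarrow> \<bar>d k \<omega>\<bar> \<le> u"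
    and "0 < \<delta>" and "\<delta> < 1"
  shows "measure M {\<omega> \<in> space M.
           \<bar>shat x (\<lambda>k. d k \<omega>) n - psum x n\<bar>
             \<le> u * sqrt (\<Sum>k=2..n. (psum x k)\<^sup>2) * lam (\<delta> / 2) * (1 + gamma_tilde n u (\<delta> / 2))}
         \<ge> 1 - \<delta>"
proof -
  interpret M: prob_space M by fact
  define N where "N i = (if i \<in> {2..n} then distr M borel (d i) else return borel 0)" for i
  interpret subgaussian_coordinates N u
    unfolding N_def using assms by (intro M.subgaussian_coordinates_distr) auto
  define L where "L = lam (\<delta> / 2)"
  define C where "C = 1 + gamma_tilde n u (\<delta> / 2)"
  define Bad where "Bad = {y \<in> space (PiM {2..n} N). (\<forall>k\<in>{2..n}. \<bar>y k\<bar> \<le> u) \<and>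
    L * u * C * sqrt (\<Sum>k=2..n. (psum x k)\<^sup>2) < \<bar>error_expansion (psum x) n y\<bar>}"
  have good_iff: "(\<lambda>k\<in>{2..n}. d k \<omega>) \<notin> Bad \<longleftrightarrow>
      \<bar>shat x (\<lambda>k. d k \<omega>) n - psum x n\<bar> \<le> u * sqrt (\<Sum>k=2..n. (psum x k)\<^sup>2) * L * C"
    if "\<omega> \<in> space M" for \<omega>
  proof -
    have "error_expansion (psum x) n (\<lambda>k\<in>{2..n}. d k \<omega>) = error_expansion (psum x) n (\<lambda>k. d k \<omega>)"
      by (rule error_expansion_cong) simp
    moreover have "(\<lambda>k\<in>{2..n}. d k \<omega>) \<in> space (PiM {2..n} N)"
      using that assms(5) by (auto simp: space_PiM N_def measurable_space)
    ultimately show ?thesis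
      using that assms(2,8) by (auto simp: Bad_def shat_minus_psum mult_ac not_less)
  qed
  have "0 < L" and "exp (- L\<^sup>2 / 2) = \<delta> / 4"
    using assms lam_pos[of "\<delta> / 2"] exp_neg_lam_square[of "\<delta> / 2"] by (simp_all add: L_def)
  moreover have "exp (L * u * sqrt (real n)) \<le> C"
    using assms by (simp add: L_def C_def exp_lam_le_one_plus_gamma_tilde)
  ultimately have "measure (PiM {2..n} N) Bad \<le> 3 * (\<delta> / 4)"
    unfolding Bad_def using assms prob_error_expansion_gt_le[where L = L and C = C and s = "psum x" and n = n]
    by simp
  moreover have "measure M {\<omega> \<in> space M. (\<lambda>k\<in>{2..n}. d k \<omega>) \<notin> Bad} = 1 - measure (PiM {2..n} N) Bad"
    using assms by (intro M.prob_restrict_indep_vars_notin) (auto simp: N_def Bad_def sets_error_expansion_gt)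
  moreover have "{\<omega> \<in> space M. \<bar>shat x (\<lambda>k. d k \<omega>) n - psum x n\<bar> \<le> u * sqrt (\<Sum>k=2..n. (psum x k)\<^sup>2) * L * C}
      = {\<omega> \<in> space M. (\<lambda>k\<in>{2..n}. d k \<omega>) \<notin> Bad}"
    using good_iff by auto
  ultimately show ?thesis
    using \<open>0 < \<delta>\<close> by (simp add: L_def C_def)
qed

end
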